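(* Let $0<q<1$, let $\mu,\nu\in\mathbb{R}$ and $\alpha,\beta\in\mathbb{C}$. Let $V$ be the vector space of formal (possibly infinite) linear combinations $\sum_{m\ge 0} c_m \xi_m$ of symbols $\xi_0,\xi_1,\xi_2,\dots$, and define linear operators $A_\pm$ on $V$ (acting termwise) by $$A_+\xi_n=-q^{-(n+1)/2}\,\xi_{n+1},\qquad A_-\xi_n=q^{n/2+1}\,\frac{1-q^{-n}}{1-q}\,\xi_{n-1}$$ (so $A_-\xi_0=0$). Let $$U^{(\mu,\nu)}(\alpha,\beta)=E_q^{(\mu)}\big((1-q)\alpha A_+\big)\,E_q^{(\nu)}\Big(\frac{\beta}{q}(1-q)A_-\Big),\qquad E_q^{(\mu)}(X)=\sum_{k=0}^\infty\frac{q^{\mu k^2}}{(q;q)_k}X^k .$$ Then for every $n\ge 0$ one has $U^{(\mu,\nu)}(\alpha,\beta)\,\xi_n=\sum_{m=0}^\infty U^{(\mu,\nu)}_{m,n}(\alpha,\beta)\,\xi_m$ with $$U^{(\mu,\nu)}_{m,n}(\alpha,\beta)=(-\beta)^{n-m}q^{(n-m)[(\nu+1/4)(n-m)-n/2-1/4]}\begin{bmatrix} n\\ m\end{bmatrix}_q\,\mathcal{P}_m^{(\mu,\nu)}\big(-(1-q)\alpha\beta;q^{n-m}\,\big|\,q\big)\quad\text{if } m\le n,$$ $$U^{(\mu,\nu)}_{m,n}(\alpha,\beta)=\frac{[-(1-q)\alpha]^{m-n}}{(q;q)_{m-n}}\,q^{(m-n)[(\mu-1/4)(m-n)-n/2-1/4]}\,\mathcal{P}_n^{(\nu,\mu)}\big(-(1-q)\alpha\beta;q^{m-n}\,\big|\,q\big)\quad\text{if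 } m\ge n .$$
   Context: $(a;q)_0=1$, $(a;q)_k=\prod_{j=0}^{k-1}(1-aq^j)$; $\begin{bmatrix} n\\ k\end{bmatrix}_q=\frac{(q;q)_n}{(q;q)_k(q;q)_{n-k}}$. For a nonnegative integer $\gamma$ and real $\mu,\nu$, the polynomial $\mathcal{P}_n^{(\mu,\nu)}$ is $$\mathcal{P}_n^{(\mu,\nu)}(x;q^\gamma|q)=\sum_{k=0}^n\frac{q^{k^2(\mu+\nu)+2\nu\gamma k}\,(q^{-n};q)_k}{(q;q)_k\,(q^{\gamma+1};q)_k}\,x^k .$$ Applying $U^{(\mu,\nu)}(\alpha,\beta)$ to $\xi_n$: the $A_-$ factor produces a finite combination, and the $A_+$ factor then produces a formal series in $V$ each of whose coefficients is a finite sum. The operators $A_\pm$ (together with $K\xi_n=q^{-n/2}\xi_n$) give a representation of the $q$-oscillator algebra $A_-A_+-q^{-1}A_+A_-=1$. *)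

theory Defs
  imports Complex_Main
begin

definition qpoch :: "real \<Rightarrow> real \<Rightarrow> nat \<Rightarrow> real" where
  "qpoch a q k = (\<Prod>j<k. 1 - a * q ^ j)"

definition qbinom :: "real \<Rightarrow> nat \<Rightarrow> nat \<Rightarrow> real" where
  "qbinom q n k = qpoch q q n / (qpoch q q k * qpoch q q (n - k))"

text \<open>The polynomial P_n^{(mu,nu)}(x; q^gamma | q).\<close>
definition Pcal :: "real \<Rightarrow> real \<Rightarrow> real \<Rightarrow> nat \<Rightarrow> nat \<Rightarrow> complex \<Rightarrow> complex" where
  "Pcal q \<mu> \<nu> n \<gamma> x = (\<Sum>k=0..n.
     complex_of_real (q powr (real k ^ 2 * (\<mu> + \<nu>) + 2 * \<nu> * real \<gamma> * real k)
       * qpoch (q powr (- real n)) q k / (qpoch q q k * qpoch (q ^ (\<gamma> + 1)) q k)) * x ^ k)"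

text \<open>Formal linear combinations sum_m c_m xi_m, represented by their coefficient sequences.\<close>
type_synonym fvec = "nat \<Rightarrow> complex"

definition xi :: "nat \<Rightarrow> fvec" where
  "xi n = (\<lambda>m. if m = n then 1 else 0)"

text \<open>A_+ xi_n = - q^{-(n+1)/2} xi_{n+1}, acting termwise.\<close>
definition Aplus :: "real \<Rightarrow> fvec \<Rightarrow> fvec" where
  "Aplus q c = (\<lambda>m. if m = 0 then 0
      else - complex_of_real (q powr (- real m / 2)) * c (m - 1))"

text \<open>A_- xi_n = q^{n/2+1} (1 - q^{-n})/(1-q) xi_{n-1}, acting termwise (A_- xi_0 = 0).\<close>
definition Aminus :: "real \<Rightarrow> fvec \<Rightarrow> fvec" where
  "Aminus q c = (\<lambda>m. complex_of_real (q powr (real (m + 1) / 2 + 1)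
      * (1 - q powr (- real (m + 1))) / (1 - q)) * c (m + 1))"

definition Eop :: "real \<Rightarrow> real \<Rightarrow> complex \<Rightarrow> (fvec \<Rightarrow> fvec) \<Rightarrow> fvec \<Rightarrow> fvec" where
  "Eop q \<mu> s A c = (\<lambda>m. \<Sum>k. complex_of_real (q powr (\<mu> * real k ^ 2) / qpoch q q k)
      * s ^ k * (((A ^^ k) c) m))"

definition Uop :: "real \<Rightarrow> real \<Rightarrow> real \<Rightarrow> complex \<Rightarrow> complex \<Rightarrow> fvec \<Rightarrow> fvec" where
  "Uop q \<mu> \<nu> \<alpha> \<beta> c =
     Eop q \<mu> (complex_of_real (1 - q) * \<alpha>) (Aplus q)
       (Eop q \<nu> (\<beta> / complex_of_real q * complex_of_real (1 - q)) (Aminus q) c)"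

end

theory Submission
  imports Defs
begin

(*
  A_- lowers xi_n to a multiple of xi_(n-k) after k steps and A_+ raises by l steps, with explicit
  coefficients, so both exponential series act through finitely many terms: the coefficient of xi_m
  is a finite sum over the intermediate level j <= min m n of terms alpha^(m-j) beta^(n-j).
  Reversing the summation (l = m - j if m <= n, k = n - j if n <= m) and rewriting (q^-n; q)_k and
  (q^(gamma+1); q)_k as ratios of (q; q)-symbols identifies each term with the corresponding
  summand of the polynomial P.
*)

lemma qpoch_0 [simp]: "qpoch a q 0 = 1"
  by (simp add: qpoch_def)

lemma qpoch_Suc [simp]: "qpoch a q (Suc k) = qpoch a q k * (1 - a * q ^ k)"
  by (simp add: qpoch_def)

lemma qpoch_pos:
  assumes "0 < q" "q < 1"
  shows "0 < qpoch q q k"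
  unfolding qpoch_def using assms
  by (intro prod_pos) (simp add: power_less_one_iff flip: power_Suc)

lemma qpoch_shift: "qpoch (q ^ (g + 1)) q k * qpoch q q g = qpoch q q (g + k)"
  by (induction k) (simp_all add: power_add mult_ac)

lemma qpoch_shift_div:
  assumes "0 < q" "q < 1"
  shows "qpoch (q ^ (g + 1)) q k = qpoch q q (g + k) / qpoch q q g"
  using qpoch_shift[of q g k] qpoch_pos[OF assms, of g] by (simp add: field_simps)

lemma qpoch_Suc_divide:
  assumes "0 < q" "q < 1"
  shows "qpoch q q (Suc r) / (1 - q ^ Suc r) = qpoch q q r"
proof -
  have "1 - q ^ Suc r \<noteq> 0"
    using power_Suc_less_one[OF assms, of r] by simp
  then show ?thesis
    by simp
qed

lemma one_minus_powr_neg: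
  assumes "0 < q"
  shows "1 - q powr (- real p) = - (q powr (- real p)) * (1 - q ^ p)"
  using assms by (simp add: algebra_simps powr_minus powr_realpow)

lemma qpoch_powr_neg:
  assumes q: "0 < q" "q < 1" and "k \<le> n"
  shows "qpoch (q powr (- real n)) q k
    = (-1) ^ k * q powr (real k * (real k - 1) / 2 - real n * real k) * qpoch q q n / qpoch q q (n - k)"
  using \<open>k \<le> n\<close>
proof (induction k)
  case 0
  show ?case
    using qpoch_pos[OF q, of n] q by simp
next
  case (Suc k)
  define r where "r = n - Suc k"
  have nk: "n - k = Suc r" using Suc.prems r_def by simp
  have factor: "1 - q powr (- real n) * q ^ k = - (q powr (real k - real n)) * (1 - q ^ Suc r)"
  proof -
    have "q powr (- real n) * q ^ k = q powr (- real (Suc r))"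
      using q Suc.prems by (simp add: nk powr_realpow[symmetric] powr_add[symmetric] r_def of_nat_diff)
    then show ?thesis
      using one_minus_powr_neg[OF q(1), of "Suc r"] Suc.prems by (simp add: r_def of_nat_diff)
  qed
  have "qpoch (q powr (- real n)) q (Suc k)
      = (-1) ^ Suc k * (q powr (real k * (real k - 1) / 2 - real n * real k) * q powr (real k - real n))
        * qpoch q q n / (qpoch q q (Suc r) / (1 - q ^ Suc r))"
    using Suc by (simp add: factor nk)
  also have "\<dots> = (-1) ^ Suc k * q powr (real (Suc k) * (real (Suc k) - 1) / 2 - real n * real (Suc k))
        * qpoch q q n / qpoch q q (n - Suc k)"
  proof -
    have "q powr (real k * (real k - 1) / 2 - real n * real k) * q powr (real k - real n)
        = q powr (real (Suc k) * (real (Suc k) - 1) / 2 - real n * real (Suc k))"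
      unfolding powr_add[symmetric] by (rule arg_cong[where f = "(powr) q"]) (simp add: field_simps)
    then show ?thesis
      unfolding qpoch_Suc_divide[OF q] by (simp add: r_def)
  qed
  finally show ?case .
qed

definition lowering_coeff :: "real \<Rightarrow> nat \<Rightarrow> nat \<Rightarrow> real" where
  "lowering_coeff q n k = (-1) ^ k * q powr (real k - real k * real n / 2 + real k * (real k - 1) / 4)
     * qpoch q q n / (qpoch q q (n - k) * (1 - q) ^ k)"

lemma lowering_coeff_Suc:
  assumes q: "0 < q" "q < 1" and "Suc k \<le> n"
  shows "lowering_coeff q n (Suc k)
    = q powr (real (n - k) / 2 + 1) * (1 - q powr (- real (n - k))) / (1 - q) * lowering_coeff q n k"
proof -
  define r where "r = n - Suc k"
  have nk: "n - k = Suc r" and rn: "real r = real n - real k - 1"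
    using assms(3) by (simp_all add: r_def of_nat_diff)
  have powers: "q powr (real (Suc r) / 2 + 1) * q powr (- real (Suc r))
      * q powr (real k - real k * real n / 2 + real k * (real k - 1) / 4)
    = q powr (real (Suc k) - real (Suc k) * real n / 2 + real (Suc k) * (real (Suc k) - 1) / 4)"
    unfolding powr_add[symmetric] by (rule arg_cong[where f = "(powr) q"]) (simp add: rn field_simps)
  have "q powr (real (n - k) / 2 + 1) * (1 - q powr (- real (n - k))) / (1 - q) * lowering_coeff q n k
    = (-1) ^ Suc k * (q powr (real (Suc r) / 2 + 1) * q powr (- real (Suc r))
        * q powr (real k - real k * real n / 2 + real k * (real k - 1) / 4))
      * qpoch q q n / (qpoch q q (Suc r) / (1 - q ^ Suc r) * (1 - q) ^ Suc k)"
    unfolding nk one_minus_powr_neg[OF q(1)] lowering_coeff_def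
    using q qpoch_pos[OF q, of "Suc r"] by (simp add: field_simps del: qpoch_Suc)
  also have "\<dots> = lowering_coeff q n (Suc k)"
    unfolding powers qpoch_Suc_divide[OF q] lowering_coeff_def by (simp add: r_def)
  finally show ?thesis ..
qed

lemma Aminus_power_xi:
  assumes q: "0 < q" "q < 1"
  shows "(Aminus q ^^ k) (xi n) j = (if j + k = n then complex_of_real (lowering_coeff q n k) else 0)"
proof (induction k arbitrary: j)
  case 0
  show ?case
    using q qpoch_pos[OF q, of n] by (simp add: xi_def lowering_coeff_def)
next
  case (Suc k)
  have "(Aminus q ^^ Suc k) (xi n) j = complex_of_real (q powr (real (j + 1) / 2 + 1)
      * (1 - q powr (- real (j + 1))) / (1 - q)) * (Aminus q ^^ k) (xi n) (j + 1)"
    by (simp add: Aminus_def)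
  also have "\<dots> = (if j + Suc k = n then complex_of_real (lowering_coeff q n (Suc k)) else 0)"
  proof (cases "j + Suc k = n")
    case True
    then have "j + 1 = n - k" by simp
    with True show ?thesis
      by (simp add: Suc lowering_coeff_Suc[OF q])
  qed (simp add: Suc)
  finally show ?case .
qed

definition raising_coeff :: "real \<Rightarrow> nat \<Rightarrow> nat \<Rightarrow> real" where
  "raising_coeff q m l = (-1) ^ l * q powr (real l * (real l - 1) / 4 - real l * real m / 2)"

lemma raising_coeff_Suc:
  assumes "0 < m"
  shows "raising_coeff q m (Suc l) = - (q powr (- real m / 2)) * raising_coeff q (m - 1) l"
proof -
  have "q powr (- real m / 2) * q powr (real l * (real l - 1) / 4 - real l * real (m - 1) / 2)
      = q powr (real (Suc l) * (real (Suc l) - 1) / 4 - real (Suc l) * real m / 2)"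
    unfolding powr_add[symmetric] using assms
    by (intro arg_cong[where f = "(powr) q"]) (simp add: of_nat_diff field_simps)
  then show ?thesis
    by (simp add: raising_coeff_def)
qed

lemma Aplus_0 [simp]: "Aplus q c 0 = 0"
  by (simp add: Aplus_def)

lemma Aplus_Suc [simp]: "Aplus q c (Suc p) = - complex_of_real (q powr (- real (Suc p) / 2)) * c p"
  by (simp add: Aplus_def)

lemma Aplus_power:
  assumes "0 < q"
  shows "(Aplus q ^^ l) c m = (if l \<le> m then complex_of_real (raising_coeff q m l) * c (m - l) else 0)"
proof (induction l arbitrary: m)
  case 0
  show ?case using assms by (simp add: raising_coeff_def)
next
  case (Suc l)
  show ?case
  proof (cases m)
    case (Suc p)
    then show ?thesis
      by (simp add: Suc.IH raising_coeff_Suc)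
  qed simp
qed

lemma Eop_Aminus_xi:
  assumes q: "0 < q" "q < 1"
  shows "Eop q \<nu> s (Aminus q) (xi n) j = (if j \<le> n then complex_of_real
      (q powr (\<nu> * real (n - j) ^ 2) / qpoch q q (n - j) * lowering_coeff q n (n - j)) * s ^ (n - j) else 0)"
proof -
  have "(\<lambda>k. complex_of_real (q powr (\<nu> * real k ^ 2) / qpoch q q k) * s ^ k * (Aminus q ^^ k) (xi n) j)
    = (\<lambda>k. if k = n - j \<and> j \<le> n then complex_of_real
      (q powr (\<nu> * real (n - j) ^ 2) / qpoch q q (n - j) * lowering_coeff q n (n - j)) * s ^ (n - j) else 0)"
    by (intro ext) (auto simp: Aminus_power_xi[OF q])
  then show ?thesis
    unfolding Eop_def by (simp add: sums_unique[OF sums_single, symmetric])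
qed

lemma Eop_Aplus:
  assumes "0 < q"
  shows "Eop q \<mu> s (Aplus q) c m = (\<Sum>l\<le>m. complex_of_real
      (q powr (\<mu> * real l ^ 2) / qpoch q q l * raising_coeff q m l) * s ^ l * c (m - l))"
proof -
  have "Eop q \<mu> s (Aplus q) c m
      = (\<Sum>l\<le>m. complex_of_real (q powr (\<mu> * real l ^ 2) / qpoch q q l) * s ^ l * (Aplus q ^^ l) c m)"
    unfolding Eop_def by (rule suminf_finite) (auto simp: Aplus_power[OF assms])
  then show ?thesis
    by (simp add: Aplus_power[OF assms] mult_ac)
qed

(* The coefficient of alpha^l beta^k in U xi_n at xi_m, coming from l raising and k lowering steps. *)
definition U_coeff :: "real \<Rightarrow> real \<Rightarrow> real \<Rightarrow> nat \<Rightarrow> nat \<Rightarrow> nat \<Rightarrow> nat \<Rightarrow> real" where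
  "U_coeff q \<mu> \<nu> m n l k = (-1) ^ (l + k) * (1 - q) ^ l
     * q powr (\<mu> * real l ^ 2 + \<nu> * real k ^ 2 + real l * (real l - 1) / 4 - real l * real m / 2
               + real k * (real k - 1) / 4 - real k * real n / 2)
     * qpoch q q n / (qpoch q q l * qpoch q q k * qpoch q q (n - k))"

lemma U_coeff_eq_product:
  assumes q: "0 < q" "q < 1"
  shows "q powr (\<mu> * real l ^ 2) / qpoch q q l * raising_coeff q m l * (1 - q) ^ l
      * (q powr (\<nu> * real k ^ 2) / qpoch q q k * lowering_coeff q n k * ((1 - q) / q) ^ k)
    = U_coeff q \<mu> \<nu> m n l k"
proof -
  have powers: "q powr (\<mu> * real l ^ 2) * q powr (real l * (real l - 1) / 4 - real l * real m / 2)
      * q powr (\<nu> * real k ^ 2) * q powr (real k - real k * real n / 2 + real k * (real k - 1) / 4)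
    = q powr (\<mu> * real l ^ 2 + \<nu> * real k ^ 2 + real l * (real l - 1) / 4 - real l * real m / 2
               + real k * (real k - 1) / 4 - real k * real n / 2) * q ^ k"
    unfolding powr_realpow[OF q(1), symmetric] powr_add[symmetric]
    by (intro arg_cong[where f = "(powr) q"]) (simp add: field_simps)
  have "q powr (\<mu> * real l ^ 2) / qpoch q q l * raising_coeff q m l * (1 - q) ^ l
      * (q powr (\<nu> * real k ^ 2) / qpoch q q k * lowering_coeff q n k * ((1 - q) / q) ^ k)
    = (-1) ^ (l + k) * (1 - q) ^ l * (q powr (\<mu> * real l ^ 2) * q powr (real l * (real l - 1) / 4 - real l * real m / 2)
      * q powr (\<nu> * real k ^ 2) * q powr (real k - real k * real n / 2 + real k * (real k - 1) / 4)) / q ^ k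
      * qpoch q q n / (qpoch q q l * qpoch q q k * qpoch q q (n - k))"
    unfolding raising_coeff_def lowering_coeff_def
    using q qpoch_pos[OF q] by (simp add: field_simps power_add power_divide)
  then show ?thesis
    unfolding powers U_coeff_def using q by simp
qed

lemma Uop_xi:
  assumes q: "0 < q" "q < 1"
  shows "Uop q \<mu> \<nu> \<alpha> \<beta> (xi n) m = (\<Sum>j=0..min m n.
      complex_of_real (U_coeff q \<mu> \<nu> m n (m - j) (n - j)) * \<alpha> ^ (m - j) * \<beta> ^ (n - j))"
proof -
  define W where "W = Eop q \<nu> (\<beta> / complex_of_real q * complex_of_real (1 - q)) (Aminus q) (xi n)"
  define T where "T j = complex_of_real (q powr (\<mu> * real (m - j) ^ 2) / qpoch q q (m - j)
      * raising_coeff q m (m - j)) * (complex_of_real (1 - q) * \<alpha>) ^ (m - j) * W j" for j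
  have W_vanishes: "W j = 0" if "n < j" for j
    using that by (simp add: W_def Eop_Aminus_xi[OF q])
  have T_eq: "T j = complex_of_real (U_coeff q \<mu> \<nu> m n (m - j) (n - j)) * \<alpha> ^ (m - j) * \<beta> ^ (n - j)"
    if "j \<le> n" for j
  proof -
    have "T j = complex_of_real (q powr (\<mu> * real (m - j) ^ 2) / qpoch q q (m - j) * raising_coeff q m (m - j)
        * (1 - q) ^ (m - j) * (q powr (\<nu> * real (n - j) ^ 2) / qpoch q q (n - j) * lowering_coeff q n (n - j)
        * ((1 - q) / q) ^ (n - j))) * \<alpha> ^ (m - j) * \<beta> ^ (n - j)"
      using that by (simp add: T_def W_def Eop_Aminus_xi[OF q] power_mult_distrib power_divide mult_ac)
    then show ?thesis
      by (simp only: U_coeff_eq_product[OF q])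
  qed
  have "Uop q \<mu> \<nu> \<alpha> \<beta> (xi n) m = (\<Sum>j=0..m. T j)"
    unfolding Uop_def W_def[symmetric] Eop_Aplus[OF q(1)] atMost_atLeast0 T_def
    by (subst sum.atLeastAtMost_rev) simp
  also have "\<dots> = (\<Sum>j=0..min m n. T j)"
    by (rule sum.mono_neutral_right) (auto simp: T_def W_vanishes)
  also have "\<dots> = (\<Sum>j=0..min m n.
      complex_of_real (U_coeff q \<mu> \<nu> m n (m - j) (n - j)) * \<alpha> ^ (m - j) * \<beta> ^ (n - j))"
    by (rule sum.cong) (simp_all add: T_eq)
  finally show ?thesis .
qed

lemma Pcal_summand_le_diagonal:
  assumes q: "0 < q" "q < 1" and "l \<le> m"
  shows "(- \<beta>) ^ d * complex_of_real (q powr (real d * ((\<nu> + 1/4) * real d - real (m + d) / 2 - 1/4))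
        * qbinom q (m + d) m)
      * (complex_of_real (q powr (real l ^ 2 * (\<mu> + \<nu>) + 2 * \<nu> * real d * real l)
          * qpoch (q powr (- real m)) q l / (qpoch q q l * qpoch (q ^ (d + 1)) q l))
        * (- complex_of_real (1 - q) * \<alpha> * \<beta>) ^ l)
    = complex_of_real (U_coeff q \<mu> \<nu> m (m + d) l (d + l)) * \<alpha> ^ l * \<beta> ^ (d + l)"
proof -
  define P1 where "P1 = q powr (real d * ((\<nu> + 1/4) * real d - real (m + d) / 2 - 1/4))"
  define P2 where "P2 = q powr (real l ^ 2 * (\<mu> + \<nu>) + 2 * \<nu> * real d * real l)"
  define P3 where "P3 = q powr (real l * (real l - 1) / 2 - real m * real l)"
  have powers: "P1 * P2 * P3 = q powr (\<mu> * real l ^ 2 + \<nu> * real (d + l) ^ 2 + real l * (real l - 1) / 4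
      - real l * real m / 2 + real (d + l) * (real (d + l) - 1) / 4 - real (d + l) * real (m + d) / 2)"
    unfolding P1_def P2_def P3_def powr_add[symmetric]
    by (intro arg_cong[where f = "(powr) q"]) (simp add: field_simps power2_eq_square)
  have "(-1) ^ d * (1 - q) ^ l * (-1) ^ l * (P1 * qbinom q (m + d) m)
      * (P2 * qpoch (q powr (- real m)) q l / (qpoch q q l * qpoch (q ^ (d + 1)) q l))
    = (-1) ^ d * (1 - q) ^ l * (P1 * P2 * P3) * qpoch q q (m + d) / (qpoch q q l * qpoch q q (d + l) * qpoch q q (m - l))"
    unfolding qbinom_def qpoch_powr_neg[OF q \<open>l \<le> m\<close>] qpoch_shift_div[OF q] P3_def
    using qpoch_pos[OF q] by (simp add: field_simps less_imp_neq[symmetric])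
  also have "\<dots> = U_coeff q \<mu> \<nu> m (m + d) l (d + l)"
    unfolding powers U_coeff_def by (simp add: power_add)
  finally have real_eq: "(-1) ^ d * (1 - q) ^ l * (-1) ^ l * (P1 * qbinom q (m + d) m)
      * (P2 * qpoch (q powr (- real m)) q l / (qpoch q q l * qpoch (q ^ (d + 1)) q l))
    = U_coeff q \<mu> \<nu> m (m + d) l (d + l)" .
  show ?thesis
    unfolding real_eq[symmetric] P1_def[symmetric] P2_def[symmetric]
    by (simp only: power_mult_distrib power_minus[of \<beta>] power_minus[of "complex_of_real (1 - q)"] power_add
        of_real_mult of_real_power of_real_minus of_real_1 mult_ac)
qed

lemma Pcal_summand_ge_diagonal:
  assumes q: "0 < q" "q < 1" and "k \<le> n"
  shows "(- complex_of_real (1 - q) * \<alpha>) ^ e / complex_of_real (qpoch q q e)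
      * complex_of_real (q powr (real e * ((\<mu> - 1/4) * real e - real n / 2 - 1/4)))
      * (complex_of_real (q powr (real k ^ 2 * (\<nu> + \<mu>) + 2 * \<mu> * real e * real k)
          * qpoch (q powr (- real n)) q k / (qpoch q q k * qpoch (q ^ (e + 1)) q k))
        * (- complex_of_real (1 - q) * \<alpha> * \<beta>) ^ k)
    = complex_of_real (U_coeff q \<mu> \<nu> (n + e) n (e + k) k) * \<alpha> ^ (e + k) * \<beta> ^ k"
proof -
  define P1 where "P1 = q powr (real e * ((\<mu> - 1/4) * real e - real n / 2 - 1/4))"
  define P2 where "P2 = q powr (real k ^ 2 * (\<nu> + \<mu>) + 2 * \<mu> * real e * real k)"
  define P3 where "P3 = q powr (real k * (real k - 1) / 2 - real n * real k)"
  have powers: "P1 * P2 * P3 = q powr (\<mu> * real (e + k) ^ 2 + \<nu> * real k ^ 2 + real (e + k) * (real (e + k) - 1) / 4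
      - real (e + k) * real (n + e) / 2 + real k * (real k - 1) / 4 - real k * real n / 2)"
    unfolding P1_def P2_def P3_def powr_add[symmetric]
    by (intro arg_cong[where f = "(powr) q"]) (simp add: field_simps power2_eq_square)
  have "(-1) ^ e * (1 - q) ^ e * (-1) ^ k * (1 - q) ^ k / qpoch q q e * P1
      * (P2 * qpoch (q powr (- real n)) q k / (qpoch q q k * qpoch (q ^ (e + 1)) q k))
    = (-1) ^ e * (1 - q) ^ (e + k) * (P1 * P2 * P3) * qpoch q q n / (qpoch q q (e + k) * qpoch q q k * qpoch q q (n - k))"
    unfolding qpoch_powr_neg[OF q \<open>k \<le> n\<close>] qpoch_shift_div[OF q] P3_def
    using qpoch_pos[OF q] by (simp add: field_simps power_add less_imp_neq[symmetric])
  also have "\<dots> = U_coeff q \<mu> \<nu> (n + e) n (e + k) k"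
    unfolding powers U_coeff_def by (simp add: power_add)
  finally have real_eq: "(-1) ^ e * (1 - q) ^ e * (-1) ^ k * (1 - q) ^ k / qpoch q q e * P1
      * (P2 * qpoch (q powr (- real n)) q k / (qpoch q q k * qpoch (q ^ (e + 1)) q k))
    = U_coeff q \<mu> \<nu> (n + e) n (e + k) k" .
  show ?thesis
    unfolding real_eq[symmetric] P1_def[symmetric] P2_def[symmetric]
    by (simp only: power_mult_distrib power_minus[of "complex_of_real (1 - q)"] power_add divide_inverse
        of_real_mult of_real_power of_real_minus of_real_1 of_real_inverse mult_ac)
qed

lemma Uop_xi_le_diagonal:
  assumes q: "0 < q" "q < 1" and "m \<le> n"
  shows "Uop q \<mu> \<nu> \<alpha> \<beta> (xi n) m = (- \<beta>) ^ (n - m)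
      * complex_of_real (q powr (real (n - m) * ((\<nu> + 1/4) * real (n - m) - real n / 2 - 1/4)) * qbinom q n m)
      * Pcal q \<mu> \<nu> m (n - m) (- complex_of_real (1 - q) * \<alpha> * \<beta>)"
proof -
  obtain d where n: "n = m + d"
    using \<open>m \<le> n\<close> le_Suc_ex by blast
  have sum_form: "Uop q \<mu> \<nu> \<alpha> \<beta> (xi n) m
      = (\<Sum>l=0..m. complex_of_real (U_coeff q \<mu> \<nu> m (m + d) l (d + l)) * \<alpha> ^ l * \<beta> ^ (d + l))"
    unfolding Uop_xi[OF q] n by (subst sum.atLeastAtMost_rev) (auto intro!: sum.cong)
  show ?thesis
    unfolding sum_form unfolding n add_diff_cancel_left' Pcal_def sum_distrib_left
    by (intro sum.cong refl, rule Pcal_summand_le_diagonal[OF q, symmetric]) simp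
qed

lemma Uop_xi_ge_diagonal:
  assumes q: "0 < q" "q < 1" and "n \<le> m"
  shows "Uop q \<mu> \<nu> \<alpha> \<beta> (xi n) m
      = (- complex_of_real (1 - q) * \<alpha>) ^ (m - n) / complex_of_real (qpoch q q (m - n))
      * complex_of_real (q powr (real (m - n) * ((\<mu> - 1/4) * real (m - n) - real n / 2 - 1/4)))
      * Pcal q \<nu> \<mu> n (m - n) (- complex_of_real (1 - q) * \<alpha> * \<beta>)"
proof -
  obtain e where m: "m = n + e"
    using \<open>n \<le> m\<close> le_Suc_ex by blast
  have sum_form: "Uop q \<mu> \<nu> \<alpha> \<beta> (xi n) m
      = (\<Sum>k=0..n. complex_of_real (U_coeff q \<mu> \<nu> (n + e) n (e + k) k) * \<alpha> ^ (e + k) * \<beta> ^ k)"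
    unfolding Uop_xi[OF q] m by (subst sum.atLeastAtMost_rev) (auto intro!: sum.cong)
  show ?thesis
    unfolding sum_form unfolding m add_diff_cancel_left' Pcal_def sum_distrib_left
    by (intro sum.cong refl, rule Pcal_summand_ge_diagonal[OF q, symmetric]) simp
qed

theorem mainTheorem1:
  fixes q \<mu> \<nu> :: real and \<alpha> \<beta> :: complex and m n :: nat
  assumes "0 < q" and "q < 1"
  shows "(m \<le> n \<longrightarrow> Uop q \<mu> \<nu> \<alpha> \<beta> (xi n) m =
           (- \<beta>) ^ (n - m)
           * complex_of_real (q powr (real (n - m) * ((\<nu> + 1/4) * real (n - m) - real n / 2 - 1/4))
                               * qbinom q n m)
           * Pcal q \<mu> \<nu> m (n - m) (- complex_of_real (1 - q) * \<alpha> * \<beta>))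
    \<and> (n \<le> m \<longrightarrow> Uop q \<mu> \<nu> \<alpha> \<beta> (xi n) m =
           (- complex_of_real (1 - q) * \<alpha>) ^ (m - n) / complex_of_real (qpoch q q (m - n))
           * complex_of_real (q powr (real (m - n) * ((\<mu> - 1/4) * real (m - n) - real n / 2 - 1/4)))
           * Pcal q \<nu> \<mu> n (m - n) (- complex_of_real (1 - q) * \<alpha> * \<beta>))"
  using Uop_xi_le_diagonal[OF assms] Uop_xi_ge_diagonal[OF assms] by blast

end
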